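(* Let $k=3$, let $\{e_1,e_2,e_3\}$ be an orthonormal basis of $\mathbb{C}^3$, $u=(e_1+e_2+e_3)/\sqrt3$, $v=(e_1+e_3)/\sqrt2$, and let \[H=0,\quad L_0=e_1u^*,\quad L_1=2vv^*+e_2e_2^*,\quad C_2=ue_1^*,\] with $I_b=\{0,1\}$, $I_p=\{2\}$. Let $\mathcal{L}(\rho)=\sum_{i\in\{0,1\}}\big(L_i\rho L_i^*-\tfrac12\{L_i^*L_i,\rho\}\big)+C_2\rho C_2^*-\tfrac12\{C_2^*C_2,\rho\}$. Then condition ($\mathcal{L}$-erg) holds and the unique $\rho_{\mathrm{inv}}\in\mathcal{D}_3$ with $\mathcal{L}(\rho_{\mathrm{inv}})=0$ is positive definite.
   Context: $\mathcal{D}_3=\{\rho\in M_3(\mathbb{C}):\rho\ge0,\operatorname{tr}\rho=1\}$. Condition ($\mathcal{L}$-erg): there exists a unique nonzero minimal orthogonal projection $\pi$ such that $\mathcal{L}(\pi M_3(\mathbb{C})\pi)\subset\pi M_3(\mathbb{C})\pi$; it implies $\mathcal{L}$ has a unique zero in $\mathcal{D}_3$. *)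

theory Defs
  imports "HOL-Analysis.Analysis"
begin

type_synonym cvec3 = "complex ^ 3"
type_synonym cmat3 = "complex ^ 3 ^ 3"

definition cinner :: "complex ^ 'n \<Rightarrow> complex ^ 'n \<Rightarrow> complex" where
  "cinner x y = (\<Sum>i\<in>UNIV. cnj (x $ i) * y $ i)"

definition adj :: "complex ^ 'n ^ 'n \<Rightarrow> complex ^ 'n ^ 'n" where
  "adj A = (\<chi> i j. cnj (A $ j $ i))"

definition outer :: "complex ^ 'n \<Rightarrow> complex ^ 'n \<Rightarrow> complex ^ 'n ^ 'n" where
  "outer x y = (\<chi> i j. x $ i * cnj (y $ j))"

definition csmult :: "complex \<Rightarrow> complex ^ 'n ^ 'n \<Rightarrow> complex ^ 'n ^ 'n" where
  "csmult c A = (\<chi> i j. c * A $ i $ j)"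

definition mtrace :: "complex ^ 'n ^ 'n \<Rightarrow> complex" where
  "mtrace A = (\<Sum>i\<in>UNIV. A $ i $ i)"

definition psd :: "complex ^ 'n ^ 'n \<Rightarrow> bool" where
  "psd A \<longleftrightarrow> (\<forall>x. Im (cinner x (A *v x)) = 0 \<and> Re (cinner x (A *v x)) \<ge> 0)"

definition posdef :: "complex ^ 'n ^ 'n \<Rightarrow> bool" where
  "posdef A \<longleftrightarrow> (\<forall>x. x \<noteq> 0 \<longrightarrow> Im (cinner x (A *v x)) = 0 \<and> Re (cinner x (A *v x)) > 0)"

definition density_matrices :: "(complex ^ 'n ^ 'n) set" where
  "density_matrices = {\<rho>. psd \<rho> \<and> mtrace \<rho> = 1}"

definition dissip :: "complex ^ 'n ^ 'n \<Rightarrow> complex ^ 'n ^ 'n \<Rightarrow> complex ^ 'n ^ 'n" where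
  "dissip A \<rho> = A ** \<rho> ** adj A - csmult (1/2) (adj A ** A ** \<rho> + \<rho> ** (adj A ** A))"

definition lindblad :: "complex ^ 'n ^ 'n \<Rightarrow> (complex ^ 'n ^ 'n) list
    \<Rightarrow> complex ^ 'n ^ 'n \<Rightarrow> complex ^ 'n ^ 'n" where
  "lindblad H Ls \<rho> = csmult (- \<i>) (H ** \<rho> - \<rho> ** H) + sum_list (map (\<lambda>A. dissip A \<rho>) Ls)"

definition orth_proj :: "complex ^ 'n ^ 'n \<Rightarrow> bool" where
  "orth_proj P \<longleftrightarrow> P ** P = P \<and> adj P = P"

definition corner_invariant :: "(complex ^ 'n ^ 'n \<Rightarrow> complex ^ 'n ^ 'n) \<Rightarrow> complex ^ 'n ^ 'n \<Rightarrow> bool" where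
  "corner_invariant L P \<longleftrightarrow> (\<forall>X. \<exists>Y. L (P ** X ** P) = P ** Y ** P)"

definition inv_proj :: "(complex ^ 'n ^ 'n \<Rightarrow> complex ^ 'n ^ 'n) \<Rightarrow> complex ^ 'n ^ 'n \<Rightarrow> bool" where
  "inv_proj L P \<longleftrightarrow> P \<noteq> 0 \<and> orth_proj P \<and> corner_invariant L P"

text \<open>Minimal: no other nonzero invariant orthogonal projection Q \<le> P (for projections,
  Q \<le> P iff Q P = Q).\<close>
definition minimal_inv_proj :: "(complex ^ 'n ^ 'n \<Rightarrow> complex ^ 'n ^ 'n) \<Rightarrow> complex ^ 'n ^ 'n \<Rightarrow> bool" where
  "minimal_inv_proj L P \<longleftrightarrow> inv_proj L P \<and> (\<forall>Q. inv_proj L Q \<and> Q ** P = Q \<longrightarrow> Q = P)"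

definition L_erg :: "(complex ^ 'n ^ 'n \<Rightarrow> complex ^ 'n ^ 'n) \<Rightarrow> bool" where
  "L_erg L \<longleftrightarrow> (\<exists>!P. minimal_inv_proj L P)"

end

theory Submission
  imports Defs
begin

text \<open>Let U be the unitary with columns e1, e2, e3. Conjugation by U turns the generator into
  the generator with the same jump operators written in the standard basis, so both claims can be
  checked there. The kernel of that generator is a linear system of rank 8 in the nine matrix
  entries whose solutions are the scalar matrices; hence I/3 is the unique stationary state, and it
  is faithful. For ergodicity, let P be a projection whose corner is invariant. Evaluating the
  generator at P z z* P and compressing by 1 - P leaves the sum of the rank-one operators
  (1 - P) K P z z* P K* (1 - P) over the jump operators K, so the range of P is invariant under every
  K. In the standard basis the three jump operators have no common invariant subspace other than
  0 and C^3, so the identity is the only invariant projection.\<close>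

lemma adj_mult: "adj (A ** B) = adj B ** adj (A :: complex^'n^'n)"
  by (simp add: adj_def matrix_matrix_mult_def vec_eq_iff mult.commute)

lemma adj_adj [simp]: "adj (adj A) = A"
  by (simp add: adj_def vec_eq_iff)

lemma adj_diff: "adj (A - B) = adj A - adj B"
  by (simp add: adj_def vec_eq_iff)

lemma adj_mat [simp]: "adj (mat 1 :: complex^'n^'n) = mat 1"
  by (simp add: adj_def mat_def vec_eq_iff)

lemma adj_csmult: "adj (csmult c A) = csmult (cnj c) (adj A)"
  by (simp add: adj_def csmult_def vec_eq_iff)

lemma csmult_one [simp]: "csmult 1 A = A"
  by (simp add: csmult_def vec_eq_iff)

lemma csmult_zero [simp]: "csmult c (0 :: complex^'n^'n) = 0"
  by (simp add: csmult_def vec_eq_iff)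

lemma csmult_add: "csmult c (A + B) = csmult c A + csmult c (B :: complex^'n^'n)"
  by (simp add: csmult_def vec_eq_iff algebra_simps)

lemma csmult_diff: "csmult c (A - B) = csmult c A - csmult c (B :: complex^'n^'n)"
  by (simp add: csmult_def vec_eq_iff algebra_simps)

lemma csmult_csmult: "csmult c (csmult d A) = csmult (c * d) (A :: complex^'n^'n)"
  by (simp add: csmult_def vec_eq_iff)

lemma csmult_mult_left: "csmult c A ** B = csmult c (A ** B :: complex^'n^'n)"
  by (simp add: csmult_def matrix_matrix_mult_def vec_eq_iff sum_distrib_left mult.assoc)

lemma csmult_mult_right: "A ** csmult c B = csmult c (A ** B :: complex^'n^'n)"
  by (simp add: csmult_def matrix_matrix_mult_def vec_eq_iff sum_distrib_left mult_ac)

lemma matrix_diff_ldistrib: "A ** (B - C) = A ** B - A ** (C :: complex^'n^'n)"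
  by (simp add: matrix_matrix_mult_def vec_eq_iff sum_subtractf algebra_simps)

lemma matrix_diff_rdistrib: "(B - C) ** A = B ** A - C ** (A :: complex^'n^'n)"
  by (simp add: matrix_matrix_mult_def vec_eq_iff sum_subtractf algebra_simps)

lemma matrix_add_rdistrib: "(B + C) ** A = B ** A + C ** (A :: complex^'n^'n)"
  by (simp add: matrix_matrix_mult_def vec_eq_iff sum.distrib algebra_simps)

lemma matrix_sum_list_conj:
  "A ** (\<Sum>x\<leftarrow>xs. f x) ** B = (\<Sum>x\<leftarrow>xs. A ** f x ** (B :: complex^'n^'n))"
  by (induction xs) (simp_all add: matrix_add_ldistrib matrix_add_rdistrib)

lemma matrix_vector_mult_smult: "A *v (c *s x) = c *s (A *v x :: 'a::comm_semiring_1^'n)"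
  by (simp add: matrix_vector_mult_def vec_eq_iff sum_distrib_left mult_ac)

lemma matrix_vector_mult_scaleR_real_algebra:
  fixes A :: "'a::real_algebra_1^'n^'m"
  shows "A *v (c *\<^sub>R x) = c *\<^sub>R (A *v x)"
  using linear_iff matrix_vector_mul_linear by blast

lemma csmult_mult_vec: "csmult c A *v x = c *s (A *v x)"
  by (simp add: csmult_def matrix_vector_mult_def vec_eq_iff sum_distrib_left mult.assoc)

lemma outer_mult_left: "A ** outer x y = outer (A *v x) y"
  by (simp add: outer_def matrix_matrix_mult_def matrix_vector_mult_def vec_eq_iff
      sum_distrib_right mult.assoc)

lemma outer_mult_right: "outer x y ** A = outer x (adj A *v y)"
  by (simp add: outer_def adj_def matrix_matrix_mult_def matrix_vector_mult_def vec_eq_iff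
      sum_distrib_left mult_ac)

lemma outer_conj: "A ** outer x y ** adj B = outer (A *v x) (B *v y)"
  by (simp add: outer_mult_left outer_mult_right)

lemma outer_mult_vec: "outer x y *v z = cinner y z *s x"
  by (simp add: outer_def cinner_def matrix_vector_mult_def vec_eq_iff sum_distrib_left mult_ac)

lemma outer_zero_left [simp]: "outer 0 y = 0"
  by (simp add: outer_def vec_eq_iff)

lemma outer_zero_right [simp]: "outer x 0 = 0"
  by (simp add: outer_def vec_eq_iff)

lemma outer_scaleR_left: "outer (r *\<^sub>R x) y = csmult (of_real r) (outer x y)"
  by (simp add: outer_def csmult_def vec_eq_iff, simp add: scaleR_conv_of_real)

lemma outer_scaleR_right: "outer x (r *\<^sub>R y) = csmult (of_real r) (outer x y)"
  by (simp add: outer_def csmult_def vec_eq_iff, simp add: scaleR_conv_of_real mult_ac)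

lemma cinner_commute: "cinner y x = cnj (cinner x y)"
  by (simp add: cinner_def mult.commute)

lemma cinner_zero_left [simp]: "cinner 0 y = 0"
  by (simp add: cinner_def)

lemma cinner_smult_right: "cinner x (c *s y) = c * cinner x y"
  by (simp add: cinner_def sum_distrib_left mult_ac)

lemma cinner_self: "cinner x x = of_real (\<Sum>i\<in>UNIV. (cmod (x $ i))\<^sup>2)"
  unfolding cinner_def of_real_sum
  by (rule sum.cong[OF refl]) (metis complex_norm_square mult.commute)

lemma cinner_self_eq_0_iff: "cinner x x = 0 \<longleftrightarrow> x = 0"
  unfolding cinner_self of_real_eq_0_iff by (simp add: sum_nonneg_eq_0_iff vec_eq_iff)

lemma mtrace_zero [simp]: "mtrace 0 = 0"
  by (simp add: mtrace_def)

lemma mtrace_outer: "mtrace (outer x y) = cinner y x"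
  by (simp add: mtrace_def outer_def cinner_def mult.commute)

lemma mtrace_sum_list: "mtrace (\<Sum>x\<leftarrow>xs. f x) = (\<Sum>x\<leftarrow>xs. mtrace (f x))"
  by (induction xs) (simp_all add: mtrace_def sum.distrib)

lemma mtrace_csmult_mat_1: "mtrace (csmult c (mat 1 :: complex^'n^'n)) = of_nat CARD('n) * c"
  by (simp add: mtrace_def csmult_def mat_def)

lemma sum_list_outer_self_eq_0:
  fixes xs :: "(complex^'a) list"
  assumes "(\<Sum>x\<leftarrow>xs. outer x x) = 0" and "x \<in> set xs"
  shows "x = 0"
proof -
  define n where "n y = (\<Sum>i\<in>UNIV. (cmod (y $ i))\<^sup>2)" for y :: "complex^'a"
  have "of_real (\<Sum>y\<leftarrow>xs. n y) = (\<Sum>y\<leftarrow>xs. cinner y y)"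
    by (induction xs) (simp_all add: n_def cinner_self)
  also have "\<dots> = 0"
    using arg_cong[OF assms(1), of mtrace] by (simp add: mtrace_sum_list mtrace_outer)
  finally have "(\<Sum>y\<leftarrow>xs. n y) = 0"
    by simp
  then have "n x = 0"
    using assms(2) by (subst (asm) sum_list_nonneg_eq_0_iff) (auto simp: n_def intro: sum_nonneg)
  then show ?thesis
    by (metis n_def cinner_self cinner_self_eq_0_iff of_real_0)
qed

lemma posdef_csmult_mat_1:
  assumes "0 < r"
  shows "posdef (csmult (of_real r) (mat 1 :: complex^'n^'n))"
  unfolding posdef_def
proof (intro allI impI)
  fix x :: "complex^'n"
  define n where "n = (\<Sum>i\<in>UNIV. (cmod (x $ i))\<^sup>2)"
  assume "x \<noteq> 0"
  moreover have "cinner x x = of_real n"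
    by (simp add: cinner_self n_def)
  ultimately have "n \<noteq> 0"
    using cinner_self_eq_0_iff[of x] by simp
  moreover have "0 \<le> n"
    by (simp add: n_def sum_nonneg)
  ultimately have "0 < r * n"
    using assms by simp
  moreover have "cinner x (csmult (of_real r) (mat 1) *v x) = of_real (r * n)"
    by (simp add: csmult_mult_vec cinner_smult_right cinner_self n_def)
  ultimately show "Im (cinner x (csmult (of_real r) (mat 1) *v x)) = 0
    \<and> Re (cinner x (csmult (of_real r) (mat 1) *v x)) > 0"
    by simp
qed

lemma posdef_imp_psd:
  assumes "posdef A"
  shows "psd A"
  unfolding psd_def
proof
  fix x
  show "Im (cinner x (A *v x)) = 0 \<and> Re (cinner x (A *v x)) \<ge> 0"
    using assms unfolding posdef_def by (cases "x = 0") (auto simp: less_imp_le)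
qed

definition unitary :: "complex^'n^'n \<Rightarrow> bool" where
  "unitary U \<longleftrightarrow> adj U ** U = mat 1 \<and> U ** adj U = mat 1"

lemma unitary_cancel:
  assumes "unitary U"
  shows "adj U ** U = mat 1" "U ** adj U = mat 1" "X ** adj U ** U = X" "X ** U ** adj U = X"
  using assms by (simp_all add: unitary_def flip: matrix_mul_assoc)

lemma unitary_conj_eq_iff:
  assumes "unitary U"
  shows "U ** X ** adj U = Y \<longleftrightarrow> X = adj U ** Y ** U"
  using assms by (auto simp: matrix_mul_assoc unitary_cancel)

lemma unitary_conj_csmult_mat_1:
  assumes "unitary U"
  shows "U ** csmult c (mat 1) ** adj U = csmult c (mat 1)"
  using assms by (simp add: csmult_mult_left csmult_mult_right unitary_cancel)

lemma orthonormal_basis_unitary: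
  fixes e1 e2 e3 :: "complex^3"
  assumes "cinner e1 e1 = 1" "cinner e2 e2 = 1" "cinner e3 e3 = 1"
    and "cinner e1 e2 = 0" "cinner e1 e3 = 0" "cinner e2 e3 = 0"
  obtains U where "unitary U" "U *v axis 1 1 = e1" "U *v axis 2 1 = e2" "U *v axis 3 1 = e3"
proof
  let ?U = "transpose (vector [e1, e2, e3]) :: complex^3^3"
  have "cinner e2 e1 = 0" "cinner e3 e1 = 0" "cinner e3 e2 = 0"
    using assms(4-6) cinner_commute complex_cnj_zero by metis+
  moreover have "(adj ?U ** ?U) $ i $ j = cinner (vector [e1, e2, e3] $ i) (vector [e1, e2, e3] $ j)"
    for i j
    by (simp add: adj_def transpose_def matrix_matrix_mult_def cinner_def)
  ultimately have "adj ?U ** ?U = mat 1"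
    using assms by (simp add: vec_eq_iff forall_3 mat_def)
  then show "unitary ?U"
    using matrix_left_right_inverse unitary_def by blast
  show "?U *v axis 1 1 = e1" "?U *v axis 2 1 = e2" "?U *v axis 3 1 = e3"
    by (simp_all add: vec_eq_iff transpose_def matrix_vector_mult_def axis_def sum_3)
qed

lemma dissip_unitary_conj:
  assumes "unitary W"
  shows "dissip (W ** K ** adj W) \<rho> = W ** dissip K (adj W ** \<rho> ** W) ** adj W"
  unfolding dissip_def
  by (simp add: adj_mult matrix_mul_assoc unitary_cancel[OF assms] csmult_mult_left
      csmult_mult_right matrix_diff_ldistrib matrix_diff_rdistrib matrix_add_ldistrib
      matrix_add_rdistrib)

lemma lindblad_unitary_conj:
  assumes "unitary W"
  shows "lindblad (W ** H ** adj W) (map (\<lambda>K. W ** K ** adj W) Ks) \<rho>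
    = W ** lindblad H Ks (adj W ** \<rho> ** W) ** adj W"
  unfolding lindblad_def
  by (simp add: o_def dissip_unitary_conj[OF assms] matrix_sum_list_conj matrix_mul_assoc
      unitary_cancel[OF assms] matrix_add_ldistrib matrix_add_rdistrib matrix_diff_ldistrib
      matrix_diff_rdistrib csmult_mult_left csmult_mult_right)

lemma dissip_csmult: "dissip (csmult c A) \<rho> = csmult (c * cnj c) (dissip A \<rho>)"
  by (simp add: dissip_def adj_csmult csmult_mult_left csmult_mult_right csmult_csmult
      csmult_add csmult_diff mult_ac)

lemma sandwich_dissip_outer:
  assumes "adj Q = Q" and "Q *v \<psi> = 0"
  shows "Q ** dissip K (outer \<psi> \<psi>) ** Q = outer (Q *v (K *v \<psi>)) (Q *v (K *v \<psi>))"
  unfolding dissip_def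
  by (simp add: matrix_mul_assoc csmult_mult_left csmult_mult_right matrix_diff_ldistrib
      matrix_diff_rdistrib matrix_add_ldistrib matrix_add_rdistrib outer_mult_left outer_mult_right
      assms matrix_vector_mul_assoc)

lemma sandwich_lindblad_outer:
  assumes "adj Q = Q" and "Q *v \<psi> = 0"
  shows "Q ** lindblad H Ks (outer \<psi> \<psi>) ** Q
    = (\<Sum>K\<leftarrow>Ks. outer (Q *v (K *v \<psi>)) (Q *v (K *v \<psi>)))"
  unfolding lindblad_def
  by (simp add: o_def matrix_add_ldistrib matrix_add_rdistrib matrix_diff_ldistrib
      matrix_diff_rdistrib csmult_mult_left csmult_mult_right matrix_sum_list_conj
      sandwich_dissip_outer[OF assms] matrix_mul_assoc outer_mult_left outer_mult_right assms
      matrix_vector_mul_assoc)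

lemma corner_invariant_lindblad_imp_range_invariant:
  assumes "orth_proj P" and "corner_invariant (lindblad H Ks) P" and "K \<in> set Ks"
  shows "P ** K ** P = K ** P"
proof -
  define Q where "Q = mat 1 - P"
  have P: "P ** P = P" "adj P = P"
    using assms(1) by (auto simp: orth_proj_def)
  have Q: "adj Q = Q" "Q ** P = 0"
    using P by (simp_all add: Q_def adj_diff matrix_diff_rdistrib)
  have "Q *v (K *v (P *v z)) = 0" for z
  proof -
    define \<psi> where "\<psi> = P *v z"
    have Q\<psi>: "Q *v \<psi> = 0"
      by (simp add: \<psi>_def matrix_vector_mul_assoc Q)
    obtain Y where "lindblad H Ks (P ** outer z z ** P) = P ** Y ** P"
      using assms(2) unfolding corner_invariant_def by blast
    moreover have "P ** outer z z ** P = outer \<psi> \<psi>"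
      by (simp add: outer_mult_left outer_mult_right P \<psi>_def)
    ultimately have "Q ** lindblad H Ks (outer \<psi> \<psi>) ** Q = 0"
      by (simp add: matrix_mul_assoc Q)
    then have "(\<Sum>K\<leftarrow>Ks. outer (Q *v (K *v \<psi>)) (Q *v (K *v \<psi>))) = 0"
      by (simp add: sandwich_lindblad_outer[OF Q(1) Q\<psi>])
    then show ?thesis
      using sum_list_outer_self_eq_0[of "map (\<lambda>K. Q *v (K *v \<psi>)) Ks"] assms(3)
      by (simp add: o_def \<psi>_def)
  qed
  then have "(mat 1 - P) ** K ** P = 0"
    by (simp add: matrix_eq Q_def matrix_vector_mul_assoc[symmetric])
  then show ?thesis
    by (simp add: matrix_diff_rdistrib)
qed

lemma range_invariant_csmult:
  assumes "c \<noteq> 0" and "P ** csmult c A ** P = csmult c A ** P"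
  shows "P ** A ** P = A ** P"
  using assms(2) unfolding csmult_mult_left csmult_mult_right
  using assms(1) by (simp add: csmult_def vec_eq_iff)

lemma inv_proj_unitary_conj:
  fixes U P :: "complex^'n^'n"
  assumes U: "unitary U" and L: "\<And>\<rho>. L \<rho> = U ** L' (adj U ** \<rho> ** U) ** adj U"
    and "inv_proj L P"
  shows "inv_proj L' (adj U ** P ** U)"
proof -
  have P: "P \<noteq> 0" "P ** P = P" "adj P = P" "corner_invariant L P"
    using \<open>inv_proj L P\<close> by (auto simp: inv_proj_def orth_proj_def)
  have "P = U ** (adj U ** P ** U) ** adj U"
    by (simp add: matrix_mul_assoc unitary_cancel[OF U])
  then have "adj U ** P ** U \<noteq> 0"
    using P(1) by auto
  moreover have "orth_proj (adj U ** P ** U)"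
  proof -
    have "X ** P ** P = X ** P" for X :: "complex^'n^'n"
      using P(2) by (simp flip: matrix_mul_assoc)
    then show ?thesis
      using P(3) by (simp add: orth_proj_def adj_mult matrix_mul_assoc unitary_cancel[OF U])
  qed
  moreover have "corner_invariant L' (adj U ** P ** U)"
    unfolding corner_invariant_def
  proof
    fix X
    obtain Y where Y: "L (P ** (U ** X ** adj U) ** P) = P ** Y ** P"
      using P(4) unfolding corner_invariant_def by blast
    have "L' (adj U ** P ** U ** X ** (adj U ** P ** U))
        = adj U ** L (P ** (U ** X ** adj U) ** P) ** U"
      by (simp add: L matrix_mul_assoc unitary_cancel[OF U])
    also have "\<dots> = adj U ** P ** U ** (adj U ** Y ** U) ** (adj U ** P ** U)"
      unfolding Y by (simp add: matrix_mul_assoc unitary_cancel[OF U])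
    finally show "\<exists>Y. L' (adj U ** P ** U ** X ** (adj U ** P ** U))
        = adj U ** P ** U ** Y ** (adj U ** P ** U)"
      by blast
  qed
  ultimately show ?thesis
    by (simp add: inv_proj_def)
qed

lemma inv_proj_mat_1: "inv_proj L (mat 1 :: complex^'n^'n)"
proof -
  have "(mat 1 :: complex^'n^'n) \<noteq> 0"
    by (simp add: vec_eq_iff mat_def)
  moreover have "corner_invariant L (mat 1 :: complex^'n^'n)"
    unfolding corner_invariant_def by simp
  ultimately show ?thesis
    by (simp add: inv_proj_def orth_proj_def)
qed

lemma L_erg_if_inv_proj_eq_mat_1:
  assumes "\<And>P. inv_proj L P \<Longrightarrow> P = (mat 1 :: complex^'n^'n)"
  shows "L_erg L"
proof -
  have "minimal_inv_proj L (mat 1)"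
    using assms inv_proj_mat_1 by (simp add: minimal_inv_proj_def)
  moreover have "P = mat 1" if "minimal_inv_proj L P" for P
    using that assms by (simp add: minimal_inv_proj_def)
  ultimately show ?thesis
    unfolding L_erg_def by blast
qed

lemma kernel_eq_scalars_unitary_conj:
  fixes U :: "complex^'n^'n"
  assumes U: "unitary U" and L: "\<And>\<rho>. L \<rho> = U ** L' (adj U ** \<rho> ** U) ** adj U"
    and kernel: "\<And>\<sigma>. L' \<sigma> = 0 \<longleftrightarrow> (\<exists>c. \<sigma> = csmult c (mat 1))"
  shows "L \<rho> = 0 \<longleftrightarrow> (\<exists>c. \<rho> = csmult c (mat 1))"
proof -
  have "L \<rho> = 0 \<longleftrightarrow> L' (adj U ** \<rho> ** U) = 0"
    by (simp add: L unitary_conj_eq_iff[OF U])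
  also have "\<dots> \<longleftrightarrow> (\<exists>c. adj U ** \<rho> ** U = csmult c (mat 1))"
    by (rule kernel)
  also have "\<dots> \<longleftrightarrow> (\<exists>c. \<rho> = csmult c (mat 1))"
    using unitary_conj_eq_iff[OF U, of "csmult _ (mat 1)" \<rho>] unitary_conj_csmult_mat_1[OF U]
    by metis
  finally show ?thesis .
qed

lemma unique_faithful_stationary_state:
  fixes L :: "complex^'n^'n \<Rightarrow> complex^'n^'n"
  assumes kernel: "\<And>\<rho>. L \<rho> = 0 \<longleftrightarrow> (\<exists>c. \<rho> = csmult c (mat 1))"
  shows "(\<exists>!\<rho>. \<rho> \<in> density_matrices \<and> L \<rho> = 0)
    \<and> (\<forall>\<rho>. \<rho> \<in> density_matrices \<and> L \<rho> = 0 \<longrightarrow> posdef \<rho>)"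
proof -
  define \<rho>0 :: "complex^'n^'n" where "\<rho>0 = csmult (1 / of_nat CARD('n)) (mat 1)"
  have trace: "mtrace (csmult c (mat 1 :: complex^'n^'n)) = 1 \<longleftrightarrow> c = 1 / of_nat CARD('n)" for c
    by (auto simp: mtrace_csmult_mat_1 eq_divide_eq mult.commute)
  have "posdef \<rho>0"
    using posdef_csmult_mat_1[of "1 / real CARD('n)"] by (simp add: \<rho>0_def)
  moreover have "\<rho> \<in> density_matrices \<and> L \<rho> = 0 \<longleftrightarrow> \<rho> = \<rho>0" for \<rho>
  proof
    assume "\<rho> \<in> density_matrices \<and> L \<rho> = 0"
    then obtain c where "\<rho> = csmult c (mat 1)" and "mtrace \<rho> = 1"
      unfolding density_matrices_def kernel by blast
    then show "\<rho> = \<rho>0"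
      using trace unfolding \<rho>0_def by auto
  next
    assume "\<rho> = \<rho>0"
    then show "\<rho> \<in> density_matrices \<and> L \<rho> = 0"
      unfolding density_matrices_def kernel \<rho>0_def
      using trace \<open>posdef \<rho>0\<close>[unfolded \<rho>0_def] by (auto intro: posdef_imp_psd)
  qed
  ultimately show ?thesis
    by auto
qed

definition std_jump0 :: "complex^3^3" where
  "std_jump0 = outer (axis 1 1) ((1 / sqrt 3) *\<^sub>R 1)"

definition std_jump1 :: "complex^3^3" where
  "std_jump1 =
    csmult 2 (outer ((1 / sqrt 2) *\<^sub>R (axis 1 1 + axis 3 1)) ((1 / sqrt 2) *\<^sub>R (axis 1 1 + axis 3 1)))
    + outer (axis 2 1) (axis 2 1)"

definition std_jump2 :: "complex^3^3" where
  "std_jump2 = outer ((1 / sqrt 3) *\<^sub>R 1) (axis 1 1)"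

definition std_generator :: "complex^3^3 \<Rightarrow> complex^3^3" where
  "std_generator = lindblad 0 [std_jump0, std_jump1, std_jump2]"

lemma std_jump0_eq: "std_jump0 = csmult (of_real (1 / sqrt 3)) (outer (axis 1 1) 1)"
  by (simp add: std_jump0_def outer_scaleR_right)

lemma std_jump1_eq:
  "std_jump1 = outer (axis 1 1 + axis 3 1) (axis 1 1 + axis 3 1) + outer (axis 2 1) (axis 2 1)"
proof -
  have "2 * (of_real (1 / sqrt 2) * of_real (1 / sqrt 2)) = (1 :: complex)"
    by (simp flip: of_real_mult)
  then show ?thesis
    by (simp add: std_jump1_def outer_scaleR_left outer_scaleR_right csmult_csmult)
qed

lemma std_jump2_eq: "std_jump2 = csmult (of_real (1 / sqrt 3)) (outer 1 (axis 1 1))"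
  by (simp add: std_jump2_def outer_scaleR_left)

lemma std_generator_eq:
  "std_generator \<sigma> = csmult (1/3) (dissip (outer (axis 1 1) 1) \<sigma>) + dissip std_jump1 \<sigma>
    + csmult (1/3) (dissip (outer 1 (axis 1 1)) \<sigma>)"
proof -
  have "of_real (1 / sqrt 3) * cnj (of_real (1 / sqrt 3)) = (1/3 :: complex)"
    by (simp flip: of_real_mult)
  then show ?thesis
    by (simp add: std_generator_def lindblad_def std_jump0_eq std_jump2_eq dissip_csmult add.assoc)
qed

lemma std_generator_entries:
  fixes \<sigma> :: "complex^3^3"
  shows
  "6 * std_generator \<sigma> $ 1 $ 1 = - 10 * \<sigma>$1$1 + \<sigma>$1$2 + \<sigma>$1$3 + \<sigma>$2$1 + 2 * \<sigma>$2$2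
      + 2 * \<sigma>$2$3 + \<sigma>$3$1 + 2 * \<sigma>$3$2 + 8 * \<sigma>$3$3"
  "6 * std_generator \<sigma> $ 1 $ 2 = \<sigma>$1$1 - 8 * \<sigma>$1$2 - \<sigma>$1$3 - \<sigma>$2$2 - \<sigma>$3$2"
  "6 * std_generator \<sigma> $ 1 $ 3 = \<sigma>$1$1 - \<sigma>$1$2 - 11 * \<sigma>$1$3 - \<sigma>$2$3 + 6 * \<sigma>$3$1 - \<sigma>$3$3"
  "6 * std_generator \<sigma> $ 2 $ 1 = \<sigma>$1$1 - 8 * \<sigma>$2$1 - \<sigma>$2$2 - \<sigma>$2$3 - \<sigma>$3$1"
  "6 * std_generator \<sigma> $ 2 $ 2 = 2 * \<sigma>$1$1 - \<sigma>$1$2 - \<sigma>$2$1 - 2 * \<sigma>$2$2 - \<sigma>$2$3 - \<sigma>$3$2"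
  "6 * std_generator \<sigma> $ 2 $ 3 = 2 * \<sigma>$1$1 - \<sigma>$1$3 - \<sigma>$2$1 - \<sigma>$2$2 - 5 * \<sigma>$2$3 - \<sigma>$3$3"
  "6 * std_generator \<sigma> $ 3 $ 1 = \<sigma>$1$1 + 6 * \<sigma>$1$3 - \<sigma>$2$1 - 11 * \<sigma>$3$1 - \<sigma>$3$2 - \<sigma>$3$3"
  "6 * std_generator \<sigma> $ 3 $ 2 = 2 * \<sigma>$1$1 - \<sigma>$1$2 - \<sigma>$2$2 - \<sigma>$3$1 - 5 * \<sigma>$3$2 - \<sigma>$3$3"
  "6 * std_generator \<sigma> $ 3 $ 3 = 8 * \<sigma>$1$1 - \<sigma>$1$3 - \<sigma>$2$3 - \<sigma>$3$1 - \<sigma>$3$2 - 8 * \<sigma>$3$3"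
  by (simp_all add: std_generator_eq std_jump1_eq dissip_def matrix_matrix_mult_def sum_3 adj_def
      csmult_def outer_def axis_def algebra_simps)

lemma std_generator_eq_0_iff: "std_generator \<sigma> = 0 \<longleftrightarrow> (\<exists>c. \<sigma> = csmult c (mat 1))"
proof
  assume "std_generator \<sigma> = 0"
  then have z: "6 * std_generator \<sigma> $ i $ j = 0" for i j
    by simp
  have "\<sigma>$1$2 = 0 \<and> \<sigma>$1$3 = 0 \<and> \<sigma>$2$1 = 0 \<and> \<sigma>$2$3 = 0 \<and> \<sigma>$3$1 = 0 \<and> \<sigma>$3$2 = 0
      \<and> \<sigma>$2$2 = \<sigma>$1$1 \<and> \<sigma>$3$3 = \<sigma>$1$1"
    using z[of 1 1] z[of 1 2] z[of 1 3] z[of 2 1] z[of 2 2] z[of 2 3] z[of 3 1] z[of 3 2] z[of 3 3]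
    unfolding std_generator_entries by algebra
  then have "\<sigma> = csmult (\<sigma>$1$1) (mat 1)"
    by (simp add: vec_eq_iff forall_3 csmult_def mat_def)
  then show "\<exists>c. \<sigma> = csmult c (mat 1)" ..
next
  assume "\<exists>c. \<sigma> = csmult c (mat 1)"
  then obtain c where \<sigma>: "\<sigma> = csmult c (mat 1)" ..
  have "6 * std_generator \<sigma> $ i $ j = 0" for i j
    using exhaust_3[of i] exhaust_3[of j] std_generator_entries[of \<sigma>]
    by (auto simp: \<sigma> csmult_def mat_def)
  then show "std_generator \<sigma> = 0"
    by (simp add: vec_eq_iff)
qed

lemma std_jumps_irreducible:
  fixes P :: "complex^3^3"
  assumes idem: "P ** P = P" and "P \<noteq> 0"
    and inv: "\<And>K. K \<in> set [std_jump0, std_jump1, std_jump2] \<Longrightarrow> P ** K ** P = K ** P"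
  shows "P = mat 1"
proof -
  define F where "F x \<longleftrightarrow> P *v x = x" for x :: "complex^3"
  have F_invariant: "F (A *v x)" if "P ** A ** P = A ** P" and "F x" for A x
    using that unfolding F_def by (metis matrix_vector_mul_assoc)
  have F_scale: "F (c *s x)" if "F x" for c x
    using that by (simp add: F_def matrix_vector_mult_smult)
  have F_unscale: "F x" if "F (c *s x)" and "c \<noteq> 0" for c x
    using F_scale[OF that(1), of "inverse c"] that(2) by (simp add: vector_smult_assoc)
  have F_diff: "F (x - y)" if "F x" and "F y" for x y
    using that by (simp add: F_def matrix_vector_mult_diff_distrib)
  have c_nz: "of_real (1 / sqrt 3) \<noteq> (0 :: complex)"
    by simp
  have "P ** std_jump0 ** P = std_jump0 ** P" "P ** std_jump1 ** P = std_jump1 ** P"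
    "P ** std_jump2 ** P = std_jump2 ** P"
    using inv by simp_all
  then have "P ** outer (axis 1 1) 1 ** P = outer (axis 1 1) 1 ** P"
    and "P ** std_jump1 ** P = std_jump1 ** P"
    and "P ** outer 1 (axis 1 1) ** P = outer 1 (axis 1 1) ** P"
    unfolding std_jump0_eq std_jump2_eq using range_invariant_csmult[OF c_nz] by blast+
  moreover have "outer (axis 1 1) 1 *v x = (x$1 + x$2 + x$3) *s axis 1 1"
    and "std_jump1 *v x = (x$1 + x$3) *s (axis 1 1 + axis 3 1) + x$2 *s axis 2 1"
    and "outer 1 (axis 1 1) *v x = x$1 *s 1" for x :: "complex^3"
    by (simp_all add: std_jump1_eq outer_mult_vec cinner_def sum_3 axis_def
        matrix_vector_mult_add_rdistrib)
  ultimately have F_jumps: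
    "F x \<Longrightarrow> F ((x$1 + x$2 + x$3) *s axis 1 1)"
    "F x \<Longrightarrow> F ((x$1 + x$3) *s (axis 1 1 + axis 3 1) + x$2 *s axis 2 1)"
    "F x \<Longrightarrow> F (x$1 *s 1)" for x
    using F_invariant by metis+
  obtain z where "P *v z \<noteq> 0"
    using \<open>P \<noteq> 0\<close> matrix_eq[of P 0] by auto
  define x where "x = P *v z"
  have "F x" "x \<noteq> 0"
    using \<open>P *v z \<noteq> 0\<close> by (simp_all add: F_def x_def matrix_vector_mul_assoc idem)
  text \<open>A nonzero vector x of the range of P yields e1: through std_jump2 if x$1 \<noteq> 0, through
    std_jump0 if the coordinates of x do not sum to 0, and otherwise after applying std_jump1.\<close>
  have F_e1_if: "F (axis 1 1)" if "F y" and "y$1 \<noteq> 0 \<or> y$1 + y$2 + y$3 \<noteq> 0" for y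
  proof -
    have "F 1" if "y$1 \<noteq> 0"
      using F_unscale F_jumps(3)[OF \<open>F y\<close>] that by blast
    then have "F ((1 + 1 + 1) *s axis 1 1)" if "y$1 \<noteq> 0"
      using F_jumps(1)[of 1] that by simp
    then show ?thesis
      using that F_unscale F_jumps(1)[OF \<open>F y\<close>] by fastforce
  qed
  have F_e1: "F (axis 1 1)"
  proof (cases "x$1 \<noteq> 0 \<or> x$1 + x$2 + x$3 \<noteq> 0")
    case True
    then show ?thesis
      using F_e1_if \<open>F x\<close> by blast
  next
    case False
    then have "x$1 = 0" "x$3 = - x$2" "x$2 \<noteq> 0"
      using \<open>x \<noteq> 0\<close> by (auto simp: vec_eq_iff forall_3 eq_neg_iff_add_eq_0 add.commute)
    then show ?thesis
      using F_e1_if[OF F_jumps(2)[OF \<open>F x\<close>]] by (simp add: axis_def)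
  qed
  have "F 1"
    using F_jumps(3)[OF F_e1] by simp
  moreover have F_e3: "F (axis 3 1)"
    using F_diff[OF F_jumps(2)[OF F_e1] F_e1] by (simp add: axis_def)
  moreover have "1 - axis 1 1 - axis 3 1 = (axis 2 1 :: complex^3)"
    by (simp add: vec_eq_iff forall_3 axis_def)
  ultimately have F_e2: "F (axis 2 1)"
    using F_diff[OF F_diff[OF \<open>F 1\<close> F_e1] F_e3] by simp
  have "y = y$1 *s axis 1 1 + y$2 *s axis 2 1 + y$3 *s axis 3 1" for y :: "complex^3"
    by (simp add: vec_eq_iff forall_3 axis_def)
  then have "P *v y = y" for y
    using F_e1 F_e2 F_e3 unfolding F_def
    by (metis matrix_vector_right_distrib F_scale F_def)
  then show ?thesis
    by (simp add: matrix_eq)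
qed

lemma std_generator_irreducible:
  assumes "inv_proj std_generator P"
  shows "P = mat 1"
proof (rule std_jumps_irreducible)
  show "P ** P = P" "P \<noteq> 0"
    using assms by (simp_all add: inv_proj_def orth_proj_def)
  show "P ** K ** P = K ** P" if "K \<in> set [std_jump0, std_jump1, std_jump2]" for K
    using assms that corner_invariant_lindblad_imp_range_invariant
    unfolding inv_proj_def std_generator_def by blast
qed

lemma lindblad_example_in_standard_basis:
  fixes U :: "complex^3^3"
  assumes U: "unitary U" and Ue: "U *v axis 1 1 = e1" "U *v axis 2 1 = e2" "U *v axis 3 1 = e3"
  defines "u \<equiv> (1 / sqrt 3) *\<^sub>R (e1 + e2 + e3)" and "v \<equiv> (1 / sqrt 2) *\<^sub>R (e1 + e3)"
  shows "lindblad 0 [outer e1 u, csmult 2 (outer v v) + outer e2 e2, outer u e1] \<rho>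
    = U ** std_generator (adj U ** \<rho> ** U) ** adj U"
proof -
  have ones: "(1 :: complex^3) = axis 1 1 + axis 2 1 + axis 3 1"
    by (simp add: vec_eq_iff forall_3 axis_def)
  have "U *v 1 = e1 + e2 + e3"
    by (subst ones) (simp add: matrix_vector_right_distrib Ue)
  then have "u = U *v ((1 / sqrt 3) *\<^sub>R 1)" "v = U *v ((1 / sqrt 2) *\<^sub>R (axis 1 1 + axis 3 1))"
    by (simp_all add: u_def v_def Ue matrix_vector_mult_scaleR_real_algebra
        matrix_vector_right_distrib)
  then have "[outer e1 u, csmult 2 (outer v v) + outer e2 e2, outer u e1]
      = map (\<lambda>K. U ** K ** adj U) [std_jump0, std_jump1, std_jump2]"
    by (simp add: std_jump0_def std_jump1_def std_jump2_def outer_conj Ue matrix_add_ldistrib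
        matrix_add_rdistrib csmult_mult_left csmult_mult_right)
  then have "lindblad 0 [outer e1 u, csmult 2 (outer v v) + outer e2 e2, outer u e1]
      = lindblad (U ** 0 ** adj U) (map (\<lambda>K. U ** K ** adj U) [std_jump0, std_jump1, std_jump2])"
    by (simp only: times0_left times0_right)
  then show ?thesis
    by (simp only: lindblad_unitary_conj[OF U] std_generator_def)
qed

theorem proposition5p1:
  fixes e1 e2 e3 :: "complex ^ 3"
  assumes orthonormal:
    "cinner e1 e1 = 1" "cinner e2 e2 = 1" "cinner e3 e3 = 1"
    "cinner e1 e2 = 0" "cinner e1 e3 = 0" "cinner e2 e3 = 0"
  defines "u \<equiv> (1 / sqrt 3) *\<^sub>R (e1 + e2 + e3)"
      and "v \<equiv> (1 / sqrt 2) *\<^sub>R (e1 + e3)"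
  defines "H \<equiv> (0 :: complex ^ 3 ^ 3)"
      and "L0 \<equiv> outer e1 u"
      and "L1 \<equiv> csmult 2 (outer v v) + outer e2 e2"
      and "C2 \<equiv> outer u e1"
  defines "\<L> \<equiv> lindblad H [L0, L1, C2]"
  shows "L_erg \<L>
    \<and> (\<exists>!\<rho>. \<rho> \<in> density_matrices \<and> \<L> \<rho> = 0)
    \<and> (\<forall>\<rho>. \<rho> \<in> density_matrices \<and> \<L> \<rho> = 0 \<longrightarrow> posdef \<rho>)"
proof -
  obtain U where U: "unitary U"
    and Ue: "U *v axis 1 1 = e1" "U *v axis 2 1 = e2" "U *v axis 3 1 = e3"
    using orthonormal_basis_unitary[OF orthonormal] .
  have L: "\<L> \<rho> = U ** std_generator (adj U ** \<rho> ** U) ** adj U" for \<rho>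
    unfolding \<L>_def H_def L0_def L1_def C2_def u_def v_def
    by (rule lindblad_example_in_standard_basis[OF U Ue])
  have "L_erg \<L>"
  proof (rule L_erg_if_inv_proj_eq_mat_1)
    fix P
    assume "inv_proj \<L> P"
    then have "adj U ** P ** U = mat 1"
      using std_generator_irreducible
        inv_proj_unitary_conj[OF U, where L = \<L> and L' = std_generator, OF L]
      by blast
    then show "P = mat 1"
      using unitary_conj_eq_iff[OF U, of "mat 1" P] unitary_cancel(2)[OF U] by simp
  qed
  moreover have kernel: "\<L> \<rho> = 0 \<longleftrightarrow> (\<exists>c. \<rho> = csmult c (mat 1))" for \<rho>
    by (rule kernel_eq_scalars_unitary_conj[OF U, where L = \<L> and L' = std_generator,
          OF L std_generator_eq_0_iff])
  ultimately show ?thesis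
    using unique_faithful_stationary_state[OF kernel] by blast
qed

end
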